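(* Let $\Gamma$ be a lattice satisfying the standing assumptions below, and let $\mathcal{F}_1,\dots,\mathcal{F}_K$ be the face-equivalence classes of $\mathcal{F}$. Let $f\in\mathcal{F}_i$ and $f'\in\mathcal{F}_j$ with $i\neq j$. Then for every face path $\rho=(f_1=f,\dots,f_m=f')$ from $f$ to $f'$, the operator $W^Z_{f,f'}(\rho)=\prod_{k=1}^m Z_{f_k}$ is a ($Z$-type) logical operator of the 3D toric code on $\Gamma$.
   Context: $\Gamma$ is a finite, connected three-dimensional cell complex with edges $C_1(\Gamma)$ (partial edges allowed at the boundary), faces $C_2(\Gamma)$, volumes $C_3(\Gamma)$; $\partial(f)$ denotes boundary edges of a face, $\partial(\nu)$ boundary faces of a volume, $\iota(e)$ the faces containing edge $e$, and $\iota(f)$ the volumes having $f$ in their boundary. Every face lies in the boundary of at most two volumes. Standing assumptions: (L1) $\Gamma$ has no boundaries in its interior; (L2) the boundary of every face of $\Gamma$ and of its dual $\Gamma^*$ is a closed path or an open path beginning and ending with partial edges; the dual complex is connected. The 3D toric code on $\Gamma$ has one qubit per face and stabilizer group generated by $B_e=\prod_{f\in\iota(e)}Z_f$ and $A_\nu=\prod_{f\in\partial(\nu)}X_f$; a logical operator is a Pauli operator commuting with all stabilizers but not in the stabilizer group (up to phase). A face path from $f_1$ to $f_m$ is a sequence of faces $(f_1,\dots,f_m)$ with pairwise distinct volumes $\nu_1,\dots,\nu_{m-1}$ such that $f_i,f_{i+1}\in\partial(\nu_i)$. Let $\mathcal{F}=\{f\in C_2(\Gamma):|\iota(f)|=1\}$.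 Two faces $f,f'\in\mathcal{F}$ are face-equivalent if there is a face path $\rho$ from $f$ to $f'$ such that $\prod_{g\in\rho}Z_g$ is a stabilizer; every face is considered equivalent to itself. As in the paper, face equivalence is taken to be an equivalence relation on $\mathcal{F}$, with classes $\mathcal{F}_1,\dots,\mathcal{F}_K$. *)

theory Defs
  imports Main
begin

(* A 3D cell complex is given by finite sets of edges E, faces F, volumes V
   (of possibly different types) together with boundary maps
   bdF f = \<partial>(f) (edges of a face) and bdV v = \<partial>(v) (faces of a volume). *)

definition iota_e :: "'f set \<Rightarrow> ('f \<Rightarrow> 'e set) \<Rightarrow> 'e \<Rightarrow> 'f set" where
  "iota_e F bdF e = {f \<in> F. e \<in> bdF f}"

definition iota_f :: "'v set \<Rightarrow> ('v \<Rightarrow> 'f set) \<Rightarrow> 'f \<Rightarrow> 'v set" where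
  "iota_f V bdV f = {v \<in> V. f \<in> bdV v}"

definition cell_adj :: "('f \<Rightarrow> 'e set) \<Rightarrow> ('v \<Rightarrow> 'f set) \<Rightarrow>
     ('e + 'f + 'v) \<Rightarrow> ('e + 'f + 'v) \<Rightarrow> bool" where
  "cell_adj bdF bdV a b =
     ((\<exists>e f. {a, b} = {Inl e, Inr (Inl f)} \<and> e \<in> bdF f) \<or>
      (\<exists>f v. {a, b} = {Inr (Inl f), Inr (Inr v)} \<and> f \<in> bdV v))"

definition cells :: "'e set \<Rightarrow> 'f set \<Rightarrow> 'v set \<Rightarrow> ('e + 'f + 'v) set" where
  "cells E F V = Inl ` E \<union> Inr ` (Inl ` F \<union> Inr ` V)"

definition dual_adj :: "('v \<Rightarrow> 'f set) \<Rightarrow> 'v \<Rightarrow> 'v \<Rightarrow> bool" where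
  "dual_adj bdV v w = (bdV v \<inter> bdV w \<noteq> {})"

definition connected_on :: "'a set \<Rightarrow> ('a \<Rightarrow> 'a \<Rightarrow> bool) \<Rightarrow> bool" where
  "connected_on S R = (\<forall>a\<in>S. \<forall>b\<in>S. (\<lambda>x y. x \<in> S \<and> y \<in> S \<and> R x y)\<^sup>*\<^sup>* a b)"

(* Formalizable part of the standing assumptions on \<Gamma>. *)
definition cell_complex3 :: "'e set \<Rightarrow> 'f set \<Rightarrow> 'v set \<Rightarrow> ('f \<Rightarrow> 'e set) \<Rightarrow> ('v \<Rightarrow> 'f set) \<Rightarrow> bool" where
  "cell_complex3 E F V bdF bdV =
     (finite E \<and> finite F \<and> finite V \<and>
      (\<forall>f\<in>F. bdF f \<subseteq> E) \<and> (\<forall>v\<in>V. bdV v \<subseteq> F) \<and>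
      (\<forall>f\<in>F. card (iota_f V bdV f) \<le> 2) \<and>
      connected_on (cells E F V) (cell_adj bdF bdV) \<and>
      connected_on V (dual_adj bdV))"

(* Pauli operators on the qubits (faces), modulo phase, in binary symplectic
   representation: (X-part, Z-part). *)
type_synonym 'f pauli = "('f \<Rightarrow> bool) \<times> ('f \<Rightarrow> bool)"

definition pauli_id :: "'f pauli" where
  "pauli_id = (\<lambda>_. False, \<lambda>_. False)"

definition pmult :: "'f pauli \<Rightarrow> 'f pauli \<Rightarrow> 'f pauli" where
  "pmult P Q = (\<lambda>q. fst P q \<noteq> fst Q q, \<lambda>q. snd P q \<noteq> snd Q q)"

definition Zop :: "'f set \<Rightarrow> 'f pauli" where
  "Zop S = (\<lambda>_. False, \<lambda>q. q \<in> S)"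

definition Xop :: "'f set \<Rightarrow> 'f pauli" where
  "Xop S = (\<lambda>q. q \<in> S, \<lambda>_. False)"

definition Zprod :: "'f list \<Rightarrow> 'f pauli" where
  "Zprod fs = (\<lambda>_. False, \<lambda>q. odd (count_list fs q))"

(* two Paulis on the qubit set F commute iff the symplectic form vanishes *)
definition pcommute :: "'f set \<Rightarrow> 'f pauli \<Rightarrow> 'f pauli \<Rightarrow> bool" where
  "pcommute F P Q =
     even (card {q \<in> F. (fst P q \<and> snd Q q) \<noteq> (snd P q \<and> fst Q q)})"

inductive_set generated :: "'f pauli set \<Rightarrow> 'f pauli set" for G where
  gen_id: "pauli_id \<in> generated G"
| gen_mult: "g \<in> G \<Longrightarrow> P \<in> generated G \<Longrightarrow> pmult g P \<in> generated G"

definition toric_gens :: "'e set \<Rightarrow> 'f set \<Rightarrow> 'v set \<Rightarrow> ('f \<Rightarrow> 'e set) \<Rightarrow> ('v \<Rightarrow> 'f set) \<Rightarrow> 'f pauli set" where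
  "toric_gens E F V bdF bdV =
     {Zop (iota_e F bdF e) | e. e \<in> E} \<union> {Xop (bdV v) | v. v \<in> V}"

definition stabilizers :: "'e set \<Rightarrow> 'f set \<Rightarrow> 'v set \<Rightarrow> ('f \<Rightarrow> 'e set) \<Rightarrow> ('v \<Rightarrow> 'f set) \<Rightarrow> 'f pauli set" where
  "stabilizers E F V bdF bdV = generated (toric_gens E F V bdF bdV)"

definition is_pauli_on :: "'f set \<Rightarrow> 'f pauli \<Rightarrow> bool" where
  "is_pauli_on F P = (\<forall>q. q \<notin> F \<longrightarrow> \<not> fst P q \<and> \<not> snd P q)"

definition logical_op :: "'e set \<Rightarrow> 'f set \<Rightarrow> 'v set \<Rightarrow> ('f \<Rightarrow> 'e set) \<Rightarrow> ('v \<Rightarrow> 'f set) \<Rightarrow> 'f pauli \<Rightarrow> bool" where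
  "logical_op E F V bdF bdV P =
     (is_pauli_on F P \<and>
      (\<forall>S \<in> stabilizers E F V bdF bdV. pcommute F P S) \<and>
      P \<notin> stabilizers E F V bdF bdV)"

definition is_Z_type :: "'f pauli \<Rightarrow> bool" where
  "is_Z_type P = (\<forall>q. \<not> fst P q)"

definition face_path :: "'f set \<Rightarrow> 'v set \<Rightarrow> ('v \<Rightarrow> 'f set) \<Rightarrow> 'f list \<Rightarrow> 'f \<Rightarrow> 'f \<Rightarrow> bool" where
  "face_path F V bdV fs f f' =
     (fs \<noteq> [] \<and> set fs \<subseteq> F \<and> hd fs = f \<and> last fs = f' \<and>
      (\<exists>vs. length vs = length fs - 1 \<and> distinct vs \<and> set vs \<subseteq> V \<and>
         (\<forall>i < length vs. fs ! i \<in> bdV (vs ! i) \<and> fs ! (i + 1) \<in> bdV (vs ! i))))"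

definition bfaces :: "'f set \<Rightarrow> 'v set \<Rightarrow> ('v \<Rightarrow> 'f set) \<Rightarrow> 'f set" where
  "bfaces F V bdV = {f \<in> F. card (iota_f V bdV f) = 1}"

definition face_equiv :: "'e set \<Rightarrow> 'f set \<Rightarrow> 'v set \<Rightarrow> ('f \<Rightarrow> 'e set) \<Rightarrow> ('v \<Rightarrow> 'f set) \<Rightarrow> 'f \<Rightarrow> 'f \<Rightarrow> bool" where
  "face_equiv E F V bdF bdV f f' =
     (f \<in> bfaces F V bdV \<and> f' \<in> bfaces F V bdV \<and>
      (f = f' \<or> (\<exists>fs. face_path F V bdV fs f f' \<and>
                       Zprod fs \<in> stabilizers E F V bdF bdV)))"

definition face_equiv_rel :: "'e set \<Rightarrow> 'f set \<Rightarrow> 'v set \<Rightarrow> ('f \<Rightarrow> 'e set) \<Rightarrow> ('v \<Rightarrow> 'f set) \<Rightarrow> 'f rel" where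
  "face_equiv_rel E F V bdF bdV = {(f, f'). face_equiv E F V bdF bdV f f'}"

end

theory Submission
  imports Defs
begin

text \<open>
  \<open>W = Z\<^sub>f\<^sub>1 \<cdots> Z\<^sub>f\<^sub>m\<close> is of \<open>Z\<close>-type, so it commutes with every \<open>B\<^sub>e\<close>, and it anticommutes
  with \<open>A\<^sub>\<nu>\<close> iff the path visits \<open>\<partial>\<nu>\<close> an odd number of times. The faces of the path
  lying on \<open>\<partial>\<nu>\<close> are exactly those adjacent to \<open>\<nu>\<close> along the path: an inner face
  \<open>f\<^sub>k\<close> already lies in the two distinct volumes \<open>\<nu>\<^sub>k\<^sub>-\<^sub>1, \<nu>\<^sub>k\<close> and in no third one,
  and the end faces lie in a single volume. As the volumes of the path are
  distinct, \<open>\<partial>\<nu>\<close> is visited either never or exactly twice. Finally \<open>W\<close> is not a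
  stabilizer, for otherwise \<open>f\<close> and \<open>f'\<close> would be face-equivalent.
\<close>

lemma even_card_xor:
  assumes "finite S"
  shows "even (card {q \<in> S. P q \<noteq> Q q}) \<longleftrightarrow>
           (even (card {q \<in> S. P q}) \<longleftrightarrow> even (card {q \<in> S. Q q}))"
proof -
  let ?A = "{q \<in> S. P q}" and ?B = "{q \<in> S. Q q}"
  have fin: "finite ?A" "finite ?B" using assms by auto
  have "{q \<in> S. P q \<noteq> Q q} = (?A \<union> ?B) - (?A \<inter> ?B)" by auto
  moreover have "card ((?A \<union> ?B) - (?A \<inter> ?B)) = card (?A \<union> ?B) - card (?A \<inter> ?B)"
    using fin by (intro card_Diff_subset) auto
  moreover have "card (?A \<inter> ?B) \<le> card (?A \<union> ?B)"
    using fin by (intro card_mono) auto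
  moreover have "card ?A + card ?B = card (?A \<union> ?B) + card (?A \<inter> ?B)"
    using fin by (rule card_Un_Int)
  ultimately show ?thesis by presburger
qed

lemma sum_count_list:
  "finite S \<Longrightarrow> sum (count_list xs) S = length (filter (\<lambda>x. x \<in> S) xs)"
proof (induction xs)
  case (Cons a xs)
  have "sum (count_list (a # xs)) S = sum (\<lambda>x. count_list xs x + (if x = a then 1 else 0)) S"
    by (rule sum.cong) auto
  also have "\<dots> = sum (count_list xs) S + (if a \<in> S then 1 else 0)"
    using Cons.prems by (simp add: sum.distrib sum.delta')
  finally show ?case using Cons by simp
qed simp

lemma pcommute_pmult:
  assumes "finite F"
  shows "pcommute F P (pmult Q R) \<longleftrightarrow> (pcommute F P Q \<longleftrightarrow> pcommute F P R)"
proof -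
  have symp: "{q \<in> F. (fst P q \<and> snd (pmult Q R) q) \<noteq> (snd P q \<and> fst (pmult Q R) q)} =
        {q \<in> F. ((fst P q \<and> snd Q q) \<noteq> (snd P q \<and> fst Q q)) \<noteq>
                 ((fst P q \<and> snd R q) \<noteq> (snd P q \<and> fst R q))}"
    by (auto simp: pmult_def)
  show ?thesis
    unfolding pcommute_def symp by (rule even_card_xor[OF assms])
qed

lemma pcommute_generated:
  assumes "finite F" and "\<forall>g \<in> G. pcommute F P g" and "Q \<in> generated G"
  shows "pcommute F P Q"
  using assms(3)
proof (induction rule: generated.induct)
  case gen_id
  show ?case by (simp add: pcommute_def pauli_id_def)
next
  case (gen_mult g Q)
  then show ?case using assms(2) by (simp add: pcommute_pmult[OF assms(1)])
qed

lemma pcommute_Z_type: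
  "is_Z_type P \<Longrightarrow> is_Z_type Q \<Longrightarrow> pcommute F P Q"
  by (simp add: pcommute_def is_Z_type_def)

lemma Zprod_is_Z_type: "is_Z_type (Zprod fs)"
  by (simp add: is_Z_type_def Zprod_def)

lemma Zop_is_Z_type: "is_Z_type (Zop S)"
  by (simp add: is_Z_type_def Zop_def)

lemma is_pauli_on_Zprod: "set fs \<subseteq> F \<Longrightarrow> is_pauli_on F (Zprod fs)"
  unfolding is_pauli_on_def Zprod_def by (metis count_notin even_zero fst_conv snd_conv subsetD)

lemma pcommute_Zprod_Xop:
  assumes "finite S" and "S \<subseteq> F"
  shows "pcommute F (Zprod fs) (Xop S) \<longleftrightarrow> even (length (filter (\<lambda>x. x \<in> S) fs))"
proof -
  have "{q \<in> F. (fst (Zprod fs) q \<and> snd (Xop S) q) \<noteq> (snd (Zprod fs) q \<and> fst (Xop S) q)} =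
        {q \<in> S. odd (count_list fs q)}"
    using assms(2) by (auto simp: Zprod_def Xop_def)
  then show ?thesis
    unfolding pcommute_def using assms(1) by (simp add: even_sum_iff flip: sum_count_list)
qed

lemma face_path_iota_f_nth:
  assumes "finite V" and le_two: "\<forall>g \<in> set fs. card (iota_f V bdV g) \<le> 2"
    and ends: "card (iota_f V bdV (hd fs)) = 1" "card (iota_f V bdV (last fs)) = 1"
    and len: "length vs = length fs - 1" "2 \<le> length fs"
    and "distinct vs" and "set vs \<subseteq> V"
    and adj: "\<forall>i < length vs. fs ! i \<in> bdV (vs ! i) \<and> fs ! (i + 1) \<in> bdV (vs ! i)"
    and k: "k < length fs"
  shows "iota_f V bdV (fs ! k) = (!) vs ` {j. j < length vs \<and> (k = j \<or> k = Suc j)}"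
proof -
  let ?A = "(!) vs ` {j. j < length vs \<and> (k = j \<or> k = Suc j)}"
  have sub: "?A \<subseteq> iota_f V bdV (fs ! k)"
    using adj \<open>set vs \<subseteq> V\<close> by (auto simp: iota_f_def)
  have fin: "finite (iota_f V bdV (fs ! k))"
    using \<open>finite V\<close> by (simp add: iota_f_def)
  have finA: "finite ?A"
    by simp
  have "card (iota_f V bdV (fs ! k)) \<le> card ?A"
  proof (cases "k = 0 \<or> k = length vs")
    case True
    have "fs \<noteq> []"
      using len by auto
    then have "fs ! 0 = hd fs" "fs ! length vs = last fs"
      using len by (simp_all add: hd_conv_nth last_conv_nth)
    then have one: "card (iota_f V bdV (fs ! k)) = 1"
      using True ends by auto
    \<comment> \<open>for \<open>k = 0\<close> truncated subtraction gives \<open>k - 1 = k\<close>\<close>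
    have "k - 1 < length vs" "k = k - 1 \<or> k = Suc (k - 1)"
      using True len by auto
    then have "?A \<noteq> {}"
      by blast
    then have "0 < card ?A"
      by (intro card_gt_0_iff[THEN iffD2] conjI finA)
    with one show ?thesis
      by linarith
  next
    case False
    then have inner: "k - 1 < length vs" "k < length vs" "Suc (k - 1) = k"
      using k len by auto
    have "vs ! (k - 1) \<in> ?A" "vs ! k \<in> ?A"
      using inner by (intro imageI; simp)+
    then have pair: "{vs ! (k - 1), vs ! k} \<subseteq> ?A"
      by blast
    have "vs ! (k - 1) \<noteq> vs ! k"
      using inner \<open>distinct vs\<close> by (simp add: nth_eq_iff_index_eq)
    then have "2 \<le> card ?A"
      using card_mono[OF finA pair] by simp
    moreover have "card (iota_f V bdV (fs ! k)) \<le> 2"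
      using le_two k by simp
    ultimately show ?thesis
      by linarith
  qed
  then show ?thesis
    by (rule card_seteq[OF fin sub, symmetric])
qed

lemma face_path_visits_volume_even:
  assumes "finite V" and le_two: "\<forall>g \<in> set fs. card (iota_f V bdV g) \<le> 2"
    and path: "face_path F V bdV fs f f'"
    and "f \<in> bfaces F V bdV" and "f' \<in> bfaces F V bdV"
    and "2 \<le> length fs" and "v \<in> V"
  shows "even (length (filter (\<lambda>x. x \<in> bdV v) fs))"
proof -
  obtain vs where len: "length vs = length fs - 1" and "distinct vs" "set vs \<subseteq> V"
    and adj: "\<forall>i < length vs. fs ! i \<in> bdV (vs ! i) \<and> fs ! (i + 1) \<in> bdV (vs ! i)"
    using path unfolding face_path_def by blast
  have ends: "card (iota_f V bdV (hd fs)) = 1" "card (iota_f V bdV (last fs)) = 1"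
    using path assms(4,5) by (auto simp: face_path_def bfaces_def)
  let ?J = "{j. j < length vs \<and> vs ! j = v}"
  have "fs ! k \<in> bdV v \<longleftrightarrow> (\<exists>j \<in> ?J. k = j \<or> k = Suc j)" if "k < length fs" for k
  proof -
    have "fs ! k \<in> bdV v \<longleftrightarrow> v \<in> iota_f V bdV (fs ! k)"
      using \<open>v \<in> V\<close> by (simp add: iota_f_def)
    then show ?thesis
      unfolding face_path_iota_f_nth[OF \<open>finite V\<close> le_two ends len \<open>2 \<le> length fs\<close>
          \<open>distinct vs\<close> \<open>set vs \<subseteq> V\<close> adj that]
      by blast
  qed
  then have visits: "{k. k < length fs \<and> fs ! k \<in> bdV v} = (\<Union>j \<in> ?J. {j, Suc j})"
    using len by auto
  have "?J = {} \<or> (\<exists>j0. ?J = {j0})"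
    using \<open>distinct vs\<close> by (auto simp: nth_eq_iff_index_eq)
  then have "card {k. k < length fs \<and> fs ! k \<in> bdV v} = 0 \<or>
      card {k. k < length fs \<and> fs ! k \<in> bdV v} = 2"
    unfolding visits by (elim disjE exE) simp_all
  then have "even (card {k. k < length fs \<and> fs ! k \<in> bdV v})"
    by (metis even_zero even_numeral)
  then show ?thesis
    by (simp only: length_filter_conv_card)
qed

lemma face_path_length_ge_two:
  "face_path F V bdV fs f f' \<Longrightarrow> f \<noteq> f' \<Longrightarrow> 2 \<le> length fs"
  by (cases fs rule: remdups_adj.cases) (auto simp: face_path_def)

lemma pcommute_Zprod_face_path:
  assumes cc: "cell_complex3 E F V bdF bdV"
    and path: "face_path F V bdV fs f f'"
    and "f \<in> bfaces F V bdV" and "f' \<in> bfaces F V bdV" and "2 \<le> length fs"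
    and S: "S \<in> stabilizers E F V bdF bdV"
  shows "pcommute F (Zprod fs) S"
proof -
  have "finite F" "finite V" and bdV: "\<forall>v \<in> V. bdV v \<subseteq> F"
    and le_two: "\<forall>g \<in> F. card (iota_f V bdV g) \<le> 2"
    using cc by (auto simp: cell_complex3_def)
  have "set fs \<subseteq> F"
    using path by (simp add: face_path_def)
  then have le_two_fs: "\<forall>g \<in> set fs. card (iota_f V bdV g) \<le> 2"
    using le_two by blast
  have volume: "pcommute F (Zprod fs) (Xop (bdV v))" if "v \<in> V" for v
  proof -
    have "bdV v \<subseteq> F"
      using bdV that by blast
    then show ?thesis
      using pcommute_Zprod_Xop[OF finite_subset[OF _ \<open>finite F\<close>]]
        face_path_visits_volume_even[OF \<open>finite V\<close> le_two_fs assms(2-5) that]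
      by simp
  qed
  have "pcommute F (Zprod fs) g" if "g \<in> toric_gens E F V bdF bdV" for g
    using that volume pcommute_Z_type[OF Zprod_is_Z_type Zop_is_Z_type]
    unfolding toric_gens_def by blast
  then show ?thesis
    using pcommute_generated[OF \<open>finite F\<close>] S unfolding stabilizers_def by blast
qed

theorem lemma3:
  fixes E :: "'e set" and F :: "'f set" and V :: "'v set"
    and bdF :: "'f \<Rightarrow> 'e set" and bdV :: "'v \<Rightarrow> 'f set"
  assumes "cell_complex3 E F V bdF bdV"
    and "equiv (bfaces F V bdV) (face_equiv_rel E F V bdF bdV)"
    and "Ci \<in> bfaces F V bdV // face_equiv_rel E F V bdF bdV"
    and "Cj \<in> bfaces F V bdV // face_equiv_rel E F V bdF bdV"
    and "Ci \<noteq> Cj" and "f \<in> Ci" and "f' \<in> Cj"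
    and "face_path F V bdV fs f f'"
  shows "is_Z_type (Zprod fs) \<and> logical_op E F V bdF bdV (Zprod fs)"
proof -
  have ends: "f \<in> bfaces F V bdV" "f' \<in> bfaces F V bdV"
    using in_quotient_imp_subset[OF assms(2)] assms(3,4,6,7) by blast+
  have not_equiv: "\<not> face_equiv E F V bdF bdV f f'"
    using quotient_eqI[OF assms(2-4,6,7)] assms(5) by (auto simp: face_equiv_rel_def)
  then have "2 \<le> length fs"
    using face_path_length_ge_two[OF assms(8)] ends by (auto simp: face_equiv_def)
  then have "\<forall>S \<in> stabilizers E F V bdF bdV. pcommute F (Zprod fs) S"
    using pcommute_Zprod_face_path[OF assms(1,8) ends] by blast
  moreover have "Zprod fs \<notin> stabilizers E F V bdF bdV"
    using not_equiv ends assms(8) by (auto simp: face_equiv_def)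
  moreover have "is_pauli_on F (Zprod fs)"
    using assms(8) by (simp add: face_path_def is_pauli_on_Zprod)
  ultimately show ?thesis
    by (simp add: logical_op_def Zprod_is_Z_type)
qed

end
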